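(* An ST graph $G$ with no twins is WDI if and only if (i) $D=\mathrm{Join}(G)$ is transitive, and (ii) for every arc $a\to b$ of $D$ there exists a vertex $c$ of $D$ such that $a\to c$ and $c\to b$ are arcs of $D$.
   Context: A digraph is a finite vertex set $V$ with arc set $E\subseteq V\times V$. $N^+(v),N^-(v)$ are out-/in-neighborhoods, $N(v)=N^+(v)\cup N^-(v)$, $d(v)=|N(v)|$. Source: $N^-(v)=\emptyset$; sink: $N^+(v)=\emptyset$; ST graph: every vertex is a source or a sink. Two distinct vertices of an ST graph are twins if $N(v)=N(w)$. A vertex $u$ is transitive if $x\to y$ is an arc for all $x\in N^-(u)$, $y\in N^+(u)$; a digraph is transitive if all its vertices are. An arc $v\to w$ is disimplicial if $x\to y$ is an arc for all $x\in N^-(w)$, $y\in N^+(v)$. A diclique is a pair $(V,W)$ of nonempty vertex sets, written $V\to W$, with $v\to w$ an arc for all $v\in V,w\in W$; an arc $v\to w$ belongs to it if $v\in V,w\in W$; it is maximal if not properly contained componentwise in another diclique; it is reduced if maximal and containing a disimplicial arc. A digraph is WDI if every arc belongs to a reduced diclique. The thin neighbor $\theta(v)$ is the unique $x\in N(v)$ with $d(x)<d(z)$ for all $z\in N(v)\setminus\{x\}$ (undefined if none); an arc $v\to w$ is thin if $\theta(v)=w$ and $\theta(w)=v$; thin arcs form a matching $M$ (no two share an endpoint); $V(M)$ is its endpoint set. $\mathrm{Join}(G)$ is the digraph with a vertex $(v,v)$ for each $v\notin V(M)$ and a vertex $(v,w)$ for each $v\to w\in M$, with $(v,w)\to(x,y)$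 an arc iff $v\to y\in E(G)$. *)

theory Defs
  imports Main
begin

definition out_nb :: "('a \<times> 'a) set \<Rightarrow> 'a \<Rightarrow> 'a set" where
  "out_nb E v = {w. (v, w) \<in> E}"

definition in_nb :: "('a \<times> 'a) set \<Rightarrow> 'a \<Rightarrow> 'a set" where
  "in_nb E v = {u. (u, v) \<in> E}"

definition nb :: "('a \<times> 'a) set \<Rightarrow> 'a \<Rightarrow> 'a set" where
  "nb E v = out_nb E v \<union> in_nb E v"

definition deg :: "('a \<times> 'a) set \<Rightarrow> 'a \<Rightarrow> nat" where
  "deg E v = card (nb E v)"

definition is_source :: "('a \<times> 'a) set \<Rightarrow> 'a \<Rightarrow> bool" where
  "is_source E v \<longleftrightarrow> in_nb E v = {}"

definition is_sink :: "('a \<times> 'a) set \<Rightarrow> 'a \<Rightarrow> bool" where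
  "is_sink E v \<longleftrightarrow> out_nb E v = {}"

definition ST_graph :: "'a set \<Rightarrow> ('a \<times> 'a) set \<Rightarrow> bool" where
  "ST_graph V E \<longleftrightarrow> (\<forall>v\<in>V. is_source E v \<or> is_sink E v)"

definition twins :: "'a set \<Rightarrow> ('a \<times> 'a) set \<Rightarrow> 'a \<Rightarrow> 'a \<Rightarrow> bool" where
  "twins V E v w \<longleftrightarrow> v \<in> V \<and> w \<in> V \<and> v \<noteq> w \<and> nb E v = nb E w"

definition no_twins :: "'a set \<Rightarrow> ('a \<times> 'a) set \<Rightarrow> bool" where
  "no_twins V E \<longleftrightarrow> \<not> (\<exists>v w. twins V E v w)"

definition transitive_vertex :: "('a \<times> 'a) set \<Rightarrow> 'a \<Rightarrow> bool" where
  "transitive_vertex E u \<longleftrightarrow> (\<forall>x\<in>in_nb E u. \<forall>y\<in>out_nb E u. (x, y) \<in> E)"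

definition transitive_digraph :: "'a set \<Rightarrow> ('a \<times> 'a) set \<Rightarrow> bool" where
  "transitive_digraph V E \<longleftrightarrow> (\<forall>u\<in>V. transitive_vertex E u)"

definition disimplicial :: "('a \<times> 'a) set \<Rightarrow> 'a \<Rightarrow> 'a \<Rightarrow> bool" where
  "disimplicial E v w \<longleftrightarrow> (v, w) \<in> E \<and> (\<forall>x\<in>in_nb E w. \<forall>y\<in>out_nb E v. (x, y) \<in> E)"

definition diclique :: "'a set \<Rightarrow> ('a \<times> 'a) set \<Rightarrow> 'a set \<Rightarrow> 'a set \<Rightarrow> bool" where
  "diclique V E A B \<longleftrightarrow> A \<noteq> {} \<and> B \<noteq> {} \<and> A \<subseteq> V \<and> B \<subseteq> V \<and> A \<times> B \<subseteq> E"

definition maximal_diclique :: "'a set \<Rightarrow> ('a \<times> 'a) set \<Rightarrow> 'a set \<Rightarrow> 'a set \<Rightarrow> bool" where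
  "maximal_diclique V E A B \<longleftrightarrow> diclique V E A B \<and>
     \<not> (\<exists>A' B'. diclique V E A' B' \<and> A \<subseteq> A' \<and> B \<subseteq> B' \<and> (A, B) \<noteq> (A', B'))"

definition reduced_diclique :: "'a set \<Rightarrow> ('a \<times> 'a) set \<Rightarrow> 'a set \<Rightarrow> 'a set \<Rightarrow> bool" where
  "reduced_diclique V E A B \<longleftrightarrow> maximal_diclique V E A B \<and>
     (\<exists>v\<in>A. \<exists>w\<in>B. disimplicial E v w)"

definition WDI :: "'a set \<Rightarrow> ('a \<times> 'a) set \<Rightarrow> bool" where
  "WDI V E \<longleftrightarrow> (\<forall>(v, w)\<in>E. \<exists>A B. reduced_diclique V E A B \<and> v \<in> A \<and> w \<in> B)"

definition is_thin_nb :: "('a \<times> 'a) set \<Rightarrow> 'a \<Rightarrow> 'a \<Rightarrow> bool" where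
  "is_thin_nb E v x \<longleftrightarrow> x \<in> nb E v \<and> (\<forall>z\<in>nb E v - {x}. deg E x < deg E z)"

definition thin_arc :: "('a \<times> 'a) set \<Rightarrow> 'a \<Rightarrow> 'a \<Rightarrow> bool" where
  "thin_arc E v w \<longleftrightarrow> (v, w) \<in> E \<and> is_thin_nb E v w \<and> is_thin_nb E w v"

definition matched :: "('a \<times> 'a) set \<Rightarrow> 'a \<Rightarrow> bool" where
  "matched E v \<longleftrightarrow> (\<exists>w. thin_arc E v w \<or> thin_arc E w v)"

definition join_V :: "'a set \<Rightarrow> ('a \<times> 'a) set \<Rightarrow> ('a \<times> 'a) set" where
  "join_V V E = {(v, v) | v. v \<in> V \<and> \<not> matched E v} \<union> {(v, w) | v w. thin_arc E v w}"

definition join_E :: "'a set \<Rightarrow> ('a \<times> 'a) set \<Rightarrow> (('a \<times> 'a) \<times> ('a \<times> 'a)) set" where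
  "join_E V E = {((v, w), (x, y)) | v w x y.
      (v, w) \<in> join_V V E \<and> (x, y) \<in> join_V V E \<and> (v, y) \<in> E}"

end

theory Submission
  imports Defs
begin

text \<open>
  An arc \<open>x \<rightarrow> y\<close> lies in a reduced diclique exactly when it is covered by a disimplicial arc
  \<open>v \<rightarrow> w\<close>, i.e. \<open>x \<rightarrow> w\<close> and \<open>v \<rightarrow> y\<close>; the diclique is then \<open>N\<^sup>-(w) \<rightarrow> N\<^sup>+(v)\<close>.
  In a twin-free ST graph a disimplicial arc \<open>v \<rightarrow> w\<close> is thin, because every other neighbour
  of \<open>v\<close> (of \<open>w\<close>) has a strictly larger neighbourhood than \<open>w\<close> (than \<open>v\<close>); and a thin arc
  covered by another thin arc coincides with it. Hence \<open>G\<close> is WDI iff every thin arc is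
  disimplicial and every arc is covered by a thin arc. In \<open>Join(G)\<close> the thin arcs become
  the only vertices with both in- and out-arcs: transitivity at \<open>(p,q)\<close> says that \<open>p \<rightarrow> q\<close>
  is disimplicial, and the 2-paths \<open>a \<rightarrow> (p,q) \<rightarrow> b\<close> are exactly the arcs covered by \<open>p \<rightarrow> q\<close>.
\<close>

lemma ST_arc_source_sink:
  assumes "E \<subseteq> V \<times> V" "ST_graph V E" "(x, y) \<in> E"
  shows "in_nb E x = {}" "out_nb E y = {}"
proof -
  have "x \<in> V" "y \<in> V" using assms by auto
  moreover have "out_nb E x \<noteq> {}" "in_nb E y \<noteq> {}"
    using assms(3) by (auto simp: out_nb_def in_nb_def)
  ultimately show "in_nb E x = {}" "out_nb E y = {}"
    using assms(2) unfolding ST_graph_def is_source_def is_sink_def by auto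
qed

lemma ST_no_path2:
  assumes "E \<subseteq> V \<times> V" "ST_graph V E" "(u, p) \<in> E" "(p, z) \<in> E"
  shows False
  using ST_arc_source_sink(1)[OF assms(1,2,4)] assms(3) by (auto simp: in_nb_def)

lemma deg_less_if_nb_subset:
  assumes "finite V" "E \<subseteq> V \<times> V" "no_twins V E"
    and "u \<in> V" "z \<in> V" "u \<noteq> z" "nb E u \<subseteq> nb E z"
  shows "deg E u < deg E z"
proof -
  have "nb E u \<noteq> nb E z"
    using assms(3-6) by (auto simp: no_twins_def twins_def)
  moreover have "finite (nb E z)"
    using assms(1,2) by (auto intro: finite_subset simp: nb_def out_nb_def in_nb_def)
  ultimately show ?thesis
    using assms(7) psubset_card_mono unfolding deg_def by blast
qed

lemma disimplicial_imp_thin_arc: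
  assumes "finite V" "E \<subseteq> V \<times> V" "ST_graph V E" "no_twins V E" "disimplicial E v w"
  shows "thin_arc E v w"
proof -
  have vw: "(v, w) \<in> E" using assms(5) by (simp add: disimplicial_def)
  have dis: "\<And>x y. (x, w) \<in> E \<Longrightarrow> (v, y) \<in> E \<Longrightarrow> (x, y) \<in> E"
    using assms(5) by (auto simp: disimplicial_def in_nb_def out_nb_def)
  have iv: "in_nb E v = {}" and ow: "out_nb E w = {}"
    using ST_arc_source_sink[OF assms(2,3) vw] by auto
  note deg_less = deg_less_if_nb_subset[OF assms(1,2,4)]
  have "deg E w < deg E z" if "z \<in> nb E v - {w}" for z
  proof -
    have vz: "(v, z) \<in> E" using that iv by (auto simp: nb_def out_nb_def)
    have "nb E w \<subseteq> nb E z" using ow dis vz by (auto simp: nb_def in_nb_def out_nb_def)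
    then show ?thesis using deg_less that vw vz assms(2) by blast
  qed
  moreover have "deg E v < deg E z" if "z \<in> nb E w - {v}" for z
  proof -
    have zw: "(z, w) \<in> E" using that ow by (auto simp: nb_def in_nb_def out_nb_def)
    have "nb E v \<subseteq> nb E z" using iv dis zw by (auto simp: nb_def in_nb_def out_nb_def)
    then show ?thesis using deg_less that vw zw assms(2) by blast
  qed
  ultimately show ?thesis
    using vw by (auto simp: thin_arc_def is_thin_nb_def nb_def in_nb_def out_nb_def)
qed

text \<open>Each of \<open>p, v\<close> is a neighbour of both \<open>q\<close> and \<open>w\<close>, so thinness forces \<open>deg p < deg v < deg p\<close>
  unless \<open>p = v\<close>; likewise for \<open>q, w\<close>.\<close>

lemma thin_arcs_eq_if_crossing:
  assumes "thin_arc E p q" "thin_arc E v w" "(p, w) \<in> E" "(v, q) \<in> E"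
  shows "v = p \<and> w = q"
proof -
  have thin: "is_thin_nb E q p" "is_thin_nb E w v" "is_thin_nb E p q" "is_thin_nb E v w"
    using assms(1,2) by (auto simp: thin_arc_def)
  have vp: "v = p"
  proof (rule ccontr)
    assume "v \<noteq> p"
    then have "v \<in> nb E q - {p}" "p \<in> nb E w - {v}"
      using assms(3,4) by (auto simp: nb_def in_nb_def)
    then have "deg E p < deg E v" "deg E v < deg E p"
      using thin(1,2) by (auto simp: is_thin_nb_def)
    then show False by simp
  qed
  moreover have "w = q"
  proof (rule ccontr)
    assume "w \<noteq> q"
    then have "w \<in> nb E p - {q}" "q \<in> nb E p - {w}"
      using assms(3,4) vp by (auto simp: nb_def out_nb_def)
    then have "deg E q < deg E w" "deg E w < deg E q"
      using thin(3,4) vp by (auto simp: is_thin_nb_def)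
    then show False by simp
  qed
  ultimately show ?thesis by simp
qed

lemma disimplicial_reduced_diclique:
  assumes "E \<subseteq> V \<times> V" "disimplicial E p q"
  shows "reduced_diclique V E (in_nb E q) (out_nb E p)"
proof -
  have pq: "(p, q) \<in> E" using assms(2) by (simp add: disimplicial_def)
  then have p: "p \<in> in_nb E q" and q: "q \<in> out_nb E p" by (auto simp: in_nb_def out_nb_def)
  have dc: "diclique V E (in_nb E q) (out_nb E p)"
    using assms pq unfolding diclique_def disimplicial_def in_nb_def out_nb_def by blast
  have "A \<subseteq> in_nb E q" "B \<subseteq> out_nb E p"
    if "diclique V E A B" "in_nb E q \<subseteq> A" "out_nb E p \<subseteq> B" for A B
    using that p q by (auto simp: diclique_def in_nb_def out_nb_def)
  then show ?thesis
    using dc p q assms(2) by (auto simp: reduced_diclique_def maximal_diclique_def)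
qed

lemma WDI_iff_disimplicial_cover:
  assumes "E \<subseteq> V \<times> V"
  shows "WDI V E \<longleftrightarrow>
    (\<forall>(x, y)\<in>E. \<exists>v w. disimplicial E v w \<and> (x, w) \<in> E \<and> (v, y) \<in> E)"
proof
  assume "WDI V E"
  show "\<forall>(x, y)\<in>E. \<exists>v w. disimplicial E v w \<and> (x, w) \<in> E \<and> (v, y) \<in> E"
  proof clarify
    fix x y assume "(x, y) \<in> E"
    then obtain A B where AB: "reduced_diclique V E A B" "x \<in> A" "y \<in> B"
      using \<open>WDI V E\<close> by (auto simp: WDI_def)
    then have "A \<times> B \<subseteq> E" "\<exists>v\<in>A. \<exists>w\<in>B. disimplicial E v w"
      by (auto simp: reduced_diclique_def maximal_diclique_def diclique_def)
    then show "\<exists>v w. disimplicial E v w \<and> (x, w) \<in> E \<and> (v, y) \<in> E"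
      using AB(2,3) by blast
  qed
next
  assume "\<forall>(x, y)\<in>E. \<exists>v w. disimplicial E v w \<and> (x, w) \<in> E \<and> (v, y) \<in> E"
  then show "WDI V E"
    using disimplicial_reduced_diclique[OF assms]
    unfolding WDI_def in_nb_def out_nb_def by fastforce
qed

lemma disimplicial_cover_iff_thin_cover:
  assumes "finite V" "E \<subseteq> V \<times> V" "ST_graph V E" "no_twins V E"
  shows "(\<forall>(x, y)\<in>E. \<exists>v w. disimplicial E v w \<and> (x, w) \<in> E \<and> (v, y) \<in> E) \<longleftrightarrow>
    (\<forall>p q. thin_arc E p q \<longrightarrow> disimplicial E p q) \<and>
    (\<forall>(x, y)\<in>E. \<exists>p q. thin_arc E p q \<and> (x, q) \<in> E \<and> (p, y) \<in> E)"
proof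
  assume cover: "\<forall>(x, y)\<in>E. \<exists>v w. disimplicial E v w \<and> (x, w) \<in> E \<and> (v, y) \<in> E"
  note thin = disimplicial_imp_thin_arc[OF assms]
  have "disimplicial E p q" if "thin_arc E p q" for p q
  proof -
    have "(p, q) \<in> E" using that by (simp add: thin_arc_def)
    then obtain v w where "disimplicial E v w" "(p, w) \<in> E" "(v, q) \<in> E" using cover by blast
    with thin_arcs_eq_if_crossing[OF that thin] show ?thesis by blast
  qed
  moreover have "\<forall>(x, y)\<in>E. \<exists>p q. thin_arc E p q \<and> (x, q) \<in> E \<and> (p, y) \<in> E"
    using cover thin by fast
  ultimately show "(\<forall>p q. thin_arc E p q \<longrightarrow> disimplicial E p q) \<and>
    (\<forall>(x, y)\<in>E. \<exists>p q. thin_arc E p q \<and> (x, q) \<in> E \<and> (p, y) \<in> E)" by blast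
qed fast

lemma thin_arc_in_join_V: "thin_arc E p q \<Longrightarrow> (p, q) \<in> join_V V E"
  by (auto simp: join_V_def)

lemma join_V_source_component:
  assumes "E \<subseteq> V \<times> V" "ST_graph V E" "(x, y) \<in> E"
  obtains x' where "(x, x') \<in> join_V V E"
proof (cases "matched E x")
  case True
  then obtain w where "thin_arc E x w \<or> thin_arc E w x" by (auto simp: matched_def)
  moreover have "\<not> thin_arc E w x"
    using ST_arc_source_sink(1)[OF assms] by (auto simp: thin_arc_def in_nb_def)
  ultimately show ?thesis using that by (auto simp: join_V_def)
next
  case False
  then show ?thesis using that assms(1,3) by (auto simp: join_V_def)
qed

lemma join_V_sink_component:
  assumes "E \<subseteq> V \<times> V" "ST_graph V E" "(x, y) \<in> E"
  obtains y' where "(y', y) \<in> join_V V E"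
proof (cases "matched E y")
  case True
  then obtain w where "thin_arc E y w \<or> thin_arc E w y" by (auto simp: matched_def)
  moreover have "\<not> thin_arc E y w"
    using ST_arc_source_sink(2)[OF assms] by (auto simp: thin_arc_def out_nb_def)
  ultimately show ?thesis using that by (auto simp: join_V_def)
next
  case False
  then show ?thesis using that assms(1,3) by (auto simp: join_V_def)
qed

lemma join_E_of_arc:
  assumes "E \<subseteq> V \<times> V" "ST_graph V E" "(x, y) \<in> E"
  obtains x' y' where "((x, x'), (y', y)) \<in> join_E V E"
  using join_V_source_component[OF assms] join_V_sink_component[OF assms] assms(3)
  by (metis (mono_tags, lifting) join_E_def mem_Collect_eq)

text \<open>A vertex \<open>(p, p)\<close> of the join with both an in- and an out-arc would be a vertex of \<open>G\<close>
  with both an in- and an out-arc.\<close>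

lemma join_V_thin_arc:
  assumes "E \<subseteq> V \<times> V" "ST_graph V E"
    and "(p, q) \<in> join_V V E" "(x, q) \<in> E" "(p, y) \<in> E"
  shows "thin_arc E p q"
  using assms(3) ST_no_path2[OF assms(1,2), of x p y] assms(4,5) by (auto simp: join_V_def)

lemma transitive_join_iff_thin_arcs_disimplicial:
  assumes "E \<subseteq> V \<times> V" "ST_graph V E"
  shows "transitive_digraph (join_V V E) (join_E V E) \<longleftrightarrow>
    (\<forall>p q. thin_arc E p q \<longrightarrow> disimplicial E p q)"
proof
  assume trans: "transitive_digraph (join_V V E) (join_E V E)"
  show "\<forall>p q. thin_arc E p q \<longrightarrow> disimplicial E p q"
  proof (intro allI impI)
    fix p q assume pq: "thin_arc E p q"
    then have c: "(p, q) \<in> join_V V E" by (rule thin_arc_in_join_V)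
    have "(u, z) \<in> E" if uq: "(u, q) \<in> E" and pz: "(p, z) \<in> E" for u z
    proof -
      obtain u' where "(u, u') \<in> join_V V E" using join_V_source_component[OF assms uq] .
      moreover obtain z' where "(z', z) \<in> join_V V E" using join_V_sink_component[OF assms pz] .
      ultimately have "((u, u'), (p, q)) \<in> join_E V E" "((p, q), (z', z)) \<in> join_E V E"
        using c uq pz by (auto simp: join_E_def)
      then have "((u, u'), (z', z)) \<in> join_E V E"
        using trans c unfolding transitive_digraph_def transitive_vertex_def in_nb_def out_nb_def
        by blast
      then show ?thesis by (auto simp: join_E_def)
    qed
    then show "disimplicial E p q"
      using pq by (auto simp: disimplicial_def thin_arc_def in_nb_def out_nb_def)
  qed
next
  assume dis: "\<forall>p q. thin_arc E p q \<longrightarrow> disimplicial E p q"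
  show "transitive_digraph (join_V V E) (join_E V E)"
    unfolding transitive_digraph_def transitive_vertex_def
  proof (clarify)
    fix p q a1 a2 b1 b2
    assume c: "(p, q) \<in> join_V V E"
      and "(a1, a2) \<in> in_nb (join_E V E) (p, q)" "(b1, b2) \<in> out_nb (join_E V E) (p, q)"
    then have a: "(a1, a2) \<in> join_V V E" "(a1, q) \<in> E"
      and b: "(b1, b2) \<in> join_V V E" "(p, b2) \<in> E"
      by (auto simp: in_nb_def out_nb_def join_E_def)
    have "disimplicial E p q" using dis join_V_thin_arc[OF assms c a(2) b(2)] by blast
    then have "(a1, b2) \<in> E" using a(2) b(2) by (auto simp: disimplicial_def in_nb_def out_nb_def)
    then show "((a1, a2), (b1, b2)) \<in> join_E V E" using a(1) b(1) by (auto simp: join_E_def)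
  qed
qed

lemma join_path2_iff_thin_cover:
  assumes "E \<subseteq> V \<times> V" "ST_graph V E"
  shows "(\<forall>(a, b)\<in>join_E V E. \<exists>c\<in>join_V V E. (a, c) \<in> join_E V E \<and> (c, b) \<in> join_E V E)
    \<longleftrightarrow> (\<forall>(x, y)\<in>E. \<exists>p q. thin_arc E p q \<and> (x, q) \<in> E \<and> (p, y) \<in> E)"
proof
  assume path2: "\<forall>(a, b)\<in>join_E V E. \<exists>c\<in>join_V V E. (a, c) \<in> join_E V E \<and> (c, b) \<in> join_E V E"
  show "\<forall>(x, y)\<in>E. \<exists>p q. thin_arc E p q \<and> (x, q) \<in> E \<and> (p, y) \<in> E"
  proof clarify
    fix x y assume xy: "(x, y) \<in> E"
    obtain x' y' where "((x, x'), (y', y)) \<in> join_E V E" using join_E_of_arc[OF assms xy] .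
    then obtain p q where c: "(p, q) \<in> join_V V E"
      and "((x, x'), (p, q)) \<in> join_E V E" "((p, q), (y', y)) \<in> join_E V E"
      using path2 by fast
    then have "(x, q) \<in> E" "(p, y) \<in> E" by (auto simp: join_E_def)
    then show "\<exists>p q. thin_arc E p q \<and> (x, q) \<in> E \<and> (p, y) \<in> E"
      using join_V_thin_arc[OF assms c] by blast
  qed
next
  assume "\<forall>(x, y)\<in>E. \<exists>p q. thin_arc E p q \<and> (x, q) \<in> E \<and> (p, y) \<in> E"
  then show "\<forall>(a, b)\<in>join_E V E. \<exists>c\<in>join_V V E. (a, c) \<in> join_E V E \<and> (c, b) \<in> join_E V E"
    using thin_arc_in_join_V unfolding join_E_def by fastforce
qed

theorem theorem14:
  fixes V :: "'a set" and E :: "('a \<times> 'a) set"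
  assumes "finite V" and "E \<subseteq> V \<times> V"
    and "ST_graph V E" and "no_twins V E"
  shows "WDI V E \<longleftrightarrow>
           transitive_digraph (join_V V E) (join_E V E) \<and>
           (\<forall>(a, b)\<in>join_E V E. \<exists>c\<in>join_V V E. (a, c) \<in> join_E V E \<and> (c, b) \<in> join_E V E)"
  using WDI_iff_disimplicial_cover[OF assms(2)] disimplicial_cover_iff_thin_cover[OF assms]
    transitive_join_iff_thin_arcs_disimplicial[OF assms(2,3)] join_path2_iff_thin_cover[OF assms(2,3)]
  by simp

end
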